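(* Let $F\subset\mathbb{R}^N$ be a self-similar fractal, i.e. the attractor (nonempty compact set with $F=\bigcup_{i=1}^m w_i(F)$) of a finite family of contracting similarities $w_1,\dots,w_m$ of $\mathbb{R}^N$. Let $w$ be one of the $w_i$ and let $x$ be its fixed point, $x=wx$. Then the tangent cone $\mathcal{T}_xF$ consists exactly of all dilations of $Z=\overline{\bigcup_{n\in\mathbb{N}}w^{-n}F}$, i.e. of the pointed metric spaces $(Z,x,c\,d)$, $c>0$, where $d$ is the Euclidean metric.
   Context: For a metric space $(X,d)$, $x\in X$ and $t>0$, $(X,x,td)$ denotes $X$ with metric $td$ and base point $x$. A tangent set of $X$ at $x$ is any limit point, as $t\to\infty$, of $(X,x,td)$ in the pointed Gromov–Hausdorff topology (on isometry classes of pointed proper metric spaces); the tangent cone $\mathcal{T}_xX$ is the family of all tangent sets of $X$ at $x$. *)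

theory Defs
  imports "HOL-Analysis.Analysis"
begin

definition proper_metric :: "'a set \<Rightarrow> ('a \<Rightarrow> 'a \<Rightarrow> real) \<Rightarrow> bool" where
  "proper_metric M d \<longleftrightarrow> Metric_space M d \<and>
     (\<forall>x\<in>M. \<forall>r. compactin (Metric_space.mtopology M d) (Metric_space.mcball M d x r))"

definition cball_in :: "'a set \<Rightarrow> ('a \<Rightarrow> 'a \<Rightarrow> real) \<Rightarrow> 'a \<Rightarrow> real \<Rightarrow> 'a set" where
  "cball_in M d p r = {q \<in> M. d p q \<le> r}"

text \<open>Pointed Gromov--Hausdorff convergence (Burago--Burago--Ivanov, Def. 8.1.1):
  for all r, eps > 0, eventually there is a map f from the closed r-ball about p_n into Y
  with f(p_n) = y, distortion < eps, and whose image is eps-dense in the (r - eps)-ball about y.\<close>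
definition pGH_conv ::
  "(nat \<Rightarrow> 'a set) \<Rightarrow> (nat \<Rightarrow> 'a \<Rightarrow> 'a \<Rightarrow> real) \<Rightarrow> (nat \<Rightarrow> 'a)
     \<Rightarrow> 'b set \<Rightarrow> ('b \<Rightarrow> 'b \<Rightarrow> real) \<Rightarrow> 'b \<Rightarrow> bool" where
  "pGH_conv Xs ds ps Y dY y \<longleftrightarrow>
     (\<forall>r>0. \<forall>\<epsilon>>0. \<exists>n0. \<forall>n\<ge>n0. \<exists>f.
        f ` cball_in (Xs n) (ds n) (ps n) r \<subseteq> Y \<and>
        f (ps n) = y \<and>
        (\<forall>a\<in>cball_in (Xs n) (ds n) (ps n) r. \<forall>b\<in>cball_in (Xs n) (ds n) (ps n) r.
            \<bar>dY (f a) (f b) - ds n a b\<bar> < \<epsilon>) \<and>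
        (\<forall>q\<in>cball_in Y dY y (r - \<epsilon>).
            \<exists>a\<in>cball_in (Xs n) (ds n) (ps n) r. dY q (f a) < \<epsilon>))"

text \<open>(Y, dY, y) is a tangent set of (X, d) at x: a limit point of (X, x, t d) as t \<rightarrow> \<infinity>,
  i.e. the pointed GH limit of (X, x, t_k d) for some sequence t_k \<rightarrow> \<infinity>.\<close>
definition tangent_set ::
  "'a set \<Rightarrow> ('a \<Rightarrow> 'a \<Rightarrow> real) \<Rightarrow> 'a \<Rightarrow> 'b set \<Rightarrow> ('b \<Rightarrow> 'b \<Rightarrow> real) \<Rightarrow> 'b \<Rightarrow> bool" where
  "tangent_set X d x Y dY y \<longleftrightarrow>
     (\<exists>t :: nat \<Rightarrow> real. (\<forall>k. t k > 0) \<and> filterlim t at_top sequentially \<and>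
        pGH_conv (\<lambda>k. X) (\<lambda>k a b. t k * d a b) (\<lambda>k. x) Y dY y)"

definition pointed_isometric ::
  "'a set \<Rightarrow> ('a \<Rightarrow> 'a \<Rightarrow> real) \<Rightarrow> 'a \<Rightarrow> 'b set \<Rightarrow> ('b \<Rightarrow> 'b \<Rightarrow> real) \<Rightarrow> 'b \<Rightarrow> bool" where
  "pointed_isometric X dX p Y dY q \<longleftrightarrow>
     (\<exists>f. bij_betw f X Y \<and> f p = q \<and> (\<forall>a\<in>X. \<forall>b\<in>X. dY (f a) (f b) = dX a b))"

definition contracting_similarity :: "('a::euclidean_space \<Rightarrow> 'a) \<Rightarrow> bool" where
  "contracting_similarity w \<longleftrightarrow>
     (\<exists>r. 0 < r \<and> r < 1 \<and> (\<forall>a b. dist (w a) (w b) = r * dist a b))"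

end

theory Submission
  imports Defs
begin

(* Let r < 1 be the ratio of w.  The iterate w^n is a similarity of ratio r^n that fixes x and
   maps w^-n F onto F, so (F, x, t d) is isometric to (w^-n F, x, t r^n d).  The sets w^-n F
   increase and their union is dense in Z, so on every ball they approximate Z arbitrarily well.
   Hence for t_k = c r^-k the spaces (F, x, t_k d) converge to (Z, x, c d).  Conversely, if t_k
   tends to infinity, write t_k = s_k r^-n_k with s_k in [1, 1/r]; along a subsequence s_k tends
   to some c, and then (F, x, t_k d) converges to (Z, x, c d).  Pointed Gromov-Hausdorff limits
   of proper spaces are unique up to pointed isometry: the approximating maps and their
   approximate inverses have pointwise limits along a common subfilter (Tychonoff), and these
   limits are mutually inverse isometries. *)

lemma compact_space_cluster_point:
  assumes T: "compact_space T" and F: "F \<noteq> bot" and s: "\<And>k. s k \<in> topspace T"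
  shows "\<exists>z\<in>topspace T. \<forall>U. openin T U \<and> z \<in> U \<longrightarrow> (\<exists>\<^sub>F k in F. s k \<in> U)"
proof (rule ccontr)
  assume "\<not> ?thesis"
  then obtain U where U: "\<And>z. z \<in> topspace T \<Longrightarrow>
      openin T (U z) \<and> z \<in> U z \<and> (\<forall>\<^sub>F k in F. s k \<notin> U z)"
    by (metis not_frequently)
  have "\<forall>V\<in>U ` topspace T. openin T V" "topspace T \<subseteq> \<Union>(U ` topspace T)"
    using U by blast+
  then obtain \<V> where "finite \<V>" "\<V> \<subseteq> U ` topspace T" "topspace T \<subseteq> \<Union>\<V>"
    using T unfolding compact_space_alt by meson
  then obtain D where D: "finite D" "D \<subseteq> topspace T" "topspace T \<subseteq> (\<Union>z\<in>D. U z)"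
    by (metis finite_subset_image)
  have "\<forall>\<^sub>F k in F. \<forall>z\<in>D. s k \<notin> U z"
    using D(1,2) U by (simp add: eventually_ball_finite subset_iff)
  then have "\<forall>\<^sub>F k in F. False"
    by (rule eventually_mono) (use D(3) s in blast)
  with F show False by simp
qed

lemma compact_space_limitin_subfilter:
  assumes T: "compact_space T" and F: "F \<noteq> bot" and s: "\<And>k. s k \<in> topspace T"
  obtains z G where "G \<noteq> bot" "G \<le> F" "limitin T s z G"
proof -
  have "\<exists>z\<in>topspace T. \<forall>U. openin T U \<and> z \<in> U \<longrightarrow> (\<exists>\<^sub>F k in F. s k \<in> U)"
    by (rule compact_space_cluster_point[OF assms])
  then obtain z where z: "z \<in> topspace T"
    and freq: "\<And>U. openin T U \<Longrightarrow> z \<in> U \<Longrightarrow> \<exists>\<^sub>F k in F. s k \<in> U"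
    by blast
  define G where "G = inf F (filtercomap s (nhdsin T z))"
  have "limitin T s z G"
    unfolding limitin_def
  proof (intro conjI z allI impI)
    fix U assume "openin T U \<and> z \<in> U"
    then have "\<forall>\<^sub>F y in nhdsin T z. y \<in> U" by (auto simp: eventually_nhdsin)
    then have "\<forall>\<^sub>F k in filtercomap s (nhdsin T z). s k \<in> U" by (auto simp: eventually_filtercomap)
    then show "\<forall>\<^sub>F k in G. s k \<in> U" unfolding G_def by (rule filter_leD[OF inf_le2])
  qed
  moreover have "G \<noteq> bot"
  proof
    assume "G = bot"
    then obtain Q P where Q: "\<forall>\<^sub>F k in F. Q k" and P: "\<forall>\<^sub>F y in nhdsin T z. P y"
      and disj: "\<And>k. Q k \<Longrightarrow> P (s k) \<Longrightarrow> False"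
      unfolding G_def trivial_limit_def eventually_inf eventually_filtercomap by blast
    obtain U where "openin T U" "z \<in> U" "\<forall>y\<in>U. P y" using P z by (auto simp: eventually_nhdsin)
    then have "\<exists>\<^sub>F k in F. s k \<in> U \<and> Q k"
      using freq Q by (simp add: frequently_eventually_frequently)
    then show False using disj \<open>\<forall>y\<in>U. P y\<close> by (auto dest: frequently_ex)
  qed
  ultimately show thesis using that by (simp add: G_def)
qed

lemma (in Metric_space) pointwise_limit_subfilter:
  assumes F: "F \<noteq> bot"
    and K: "\<And>i. i \<in> I \<Longrightarrow> compactin mtopology (K i)" "\<And>i. i \<in> I \<Longrightarrow> K i \<noteq> {}"
    and ev: "\<And>i. i \<in> I \<Longrightarrow> \<forall>\<^sub>F k in F. s k i \<in> K i"
  shows "\<exists>G S. G \<noteq> bot \<and> G \<le> F \<and> (\<forall>i\<in>I. S i \<in> K i \<and> ((\<lambda>k. d (s k i) (S i)) \<longlongrightarrow> 0) G)"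
proof -
  have KM: "K i \<subseteq> M" if "i \<in> I" for i
    using compactin_subset_topspace[OF K(1)[OF that]] by simp
  \<comment> \<open>Clamping the sequence into the sets K i puts it into a compact product space.\<close>
  define s' where "s' k i = (if s k i \<in> K i then s k i else (SOME y. y \<in> K i))" for k i
  have s'K: "s' k i \<in> K i" if "i \<in> I" for k i
    using K(2)[OF that] by (auto simp: s'_def intro: someI_ex)
  define T where "T = product_topology (\<lambda>i. subtopology mtopology (K i)) I"
  have topT: "topspace T = PiE I K"
    using KM by (auto simp: T_def PiE_def Pi_def)
  have "compact_space T"
    unfolding T_def compact_space_product_topology using K(1) by (simp add: compact_space_subtopology)
  moreover have "restrict (s' k) I \<in> topspace T" for k
    using s'K by (simp add: topT)
  ultimately obtain z G where G: "G \<noteq> bot" "G \<le> F"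
    and lim: "limitin T (\<lambda>k. restrict (s' k) I) z G"
    using compact_space_limitin_subfilter[OF _ F] by metis
  show ?thesis
  proof (intro exI[of _ G] exI[of _ z] conjI G ballI)
    show "z i \<in> K i" if "i \<in> I" for i
      using limitin_topspace[OF lim] that by (simp add: topT PiE_mem)
    show "((\<lambda>k. d (s k i) (z i)) \<longlongrightarrow> 0) G" if i: "i \<in> I" for i
    proof -
      have "continuous_map T mtopology (\<lambda>f. f i)"
        unfolding T_def
        by (rule continuous_map_into_fulltopology[OF continuous_map_product_projection[OF i]])
      from continuous_map_limit[OF this lim]
      have "limitin mtopology (\<lambda>k. s' k i) (z i) G" using i by (simp add: o_def)
      moreover have "\<forall>\<^sub>F k in G. s' k i = s k i"
        using filter_leD[OF G(2) ev[OF i]] by eventually_elim (simp add: s'_def)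
      ultimately have "limitin mtopology (\<lambda>k. s k i) (z i) G"
        by (rule limitin_transform_eventually[rotated])
      then show ?thesis by (simp add: limitin_metric_dist_null)
    qed
  qed
qed

lemma eq_0_if_eventually_le_null:
  fixes c :: real
  assumes "F \<noteq> bot" "0 \<le> c" "(u \<longlongrightarrow> 0) F" "\<forall>\<^sub>F k in F. c \<le> u k"
  shows "c = 0"
  using tendsto_le[OF assms(1) assms(3) tendsto_const assms(4)] assms(2) by simp

lemma (in Metric_space) mdist_diff_le:
  assumes "x \<in> M" "y \<in> M" "x' \<in> M" "y' \<in> M"
  shows "\<bar>d x y - d x' y'\<bar> \<le> d x x' + d y y'"
  using triangle[of x x' y] triangle[of x' y' y] triangle[of x' x y'] triangle[of x y y'] assms
    commute[of y' y] commute[of x' x]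
  by (simp add: abs_le_iff)

lemma Metric_space_scaled_dist:
  assumes "0 < c"
  shows "Metric_space S (\<lambda>a b. c * dist a b)"
proof
  show "c * dist x z \<le> c * dist x y + c * dist y z" for x y z
    using mult_left_mono[OF dist_triangle[of x z y]] assms by (simp add: distrib_left)
qed (use assms in \<open>auto simp: dist_commute\<close>)

lemma proper_metric_scale:
  assumes M: "proper_metric M d" and c: "0 < c"
  shows "proper_metric M (\<lambda>a b. c * d a b)"
proof -
  interpret Metric_space M d using M by (simp add: proper_metric_def)
  interpret S: Metric_space M "\<lambda>a b. c * d a b"
  proof
    show "c * d x z \<le> c * d x y + c * d y z" if "x \<in> M" "y \<in> M" "z \<in> M" for x y z
      using mult_left_mono[OF triangle[OF that] less_imp_le[OF c]] by (simp add: distrib_left)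
  qed (use c commute in auto)
  have mball: "S.mball x r = mball x (r / c)" and mcball: "S.mcball x r = mcball x (r / c)" for x r
    using c by (auto simp: pos_less_divide_eq pos_le_divide_eq mult.commute)
  have "(\<exists>r>0. mball x (r / c) \<subseteq> U) \<longleftrightarrow> (\<exists>r>0. mball x r \<subseteq> U)" for x U
    using c by (metis divide_pos_pos mult_pos_pos nonzero_mult_div_cancel_left order_less_irrefl)
  then have "S.mtopology = mtopology"
    unfolding topology_eq S.openin_mtopology openin_mtopology mball by simp
  then show ?thesis
    using M S.Metric_space_axioms by (simp add: proper_metric_def mcball)
qed

lemma proper_metric_closed:
  fixes Z :: "'a::heine_borel set"
  assumes "closed Z"
  shows "proper_metric Z dist"
proof -
  interpret Submetric UNIV dist Z by unfold_locales simp
  have "compactin (subtopology euclidean Z) (Z \<inter> cball x r)" for x r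
    using assms by (simp add: compactin_subtopology closed_Int_compact)
  then show ?thesis
    using sub.Metric_space_axioms
    by (simp add: proper_metric_def mtopology_submetric mcball_submetric_eq)
qed

lemma abs_scaled_dist_diff_less:
  fixes x a1 a2 z1 z2 :: "'a::metric_space"
  assumes c: "0 < c" and s: "\<bar>s - c\<bar> \<le> \<theta>" and a: "dist x a1 \<le> M" "dist x a2 \<le> M"
    and z: "dist z1 a1 < \<delta>" "dist z2 a2 < \<delta>"
  shows "\<bar>s * dist a1 a2 - c * dist z1 z2\<bar> < 2 * \<theta> * M + 2 * c * \<delta>"
proof -
  have "s * dist a1 a2 - c * dist z1 z2 = (s - c) * dist a1 a2 + c * (dist a1 a2 - dist z1 z2)"
    by (simp add: algebra_simps)
  then have "\<bar>s * dist a1 a2 - c * dist z1 z2\<bar>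
      \<le> \<bar>(s - c) * dist a1 a2\<bar> + \<bar>c * (dist a1 a2 - dist z1 z2)\<bar>"
    by (metis abs_triangle_ineq)
  also have "\<dots> = \<bar>s - c\<bar> * dist a1 a2 + c * \<bar>dist a1 a2 - dist z1 z2\<bar>"
    using c by (simp add: abs_mult)
  finally have "\<bar>s * dist a1 a2 - c * dist z1 z2\<bar>
      \<le> \<bar>s - c\<bar> * dist a1 a2 + c * \<bar>dist a1 a2 - dist z1 z2\<bar>" .
  moreover have "\<bar>s - c\<bar> * dist a1 a2 \<le> \<theta> * (2 * M)"
    using s dist_triangle[of a1 a2 x] a by (intro mult_mono) (auto simp: dist_commute)
  moreover have "\<bar>dist a1 a2 - dist z1 z2\<bar> \<le> dist z1 a1 + dist z2 a2"
    using Met_TC.mdist_diff_le[of a1 a2 z1 z2] by (simp add: dist_commute)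
  then have "c * \<bar>dist a1 a2 - dist z1 z2\<bar> < c * (2 * \<delta>)"
    using c z by (intro mult_strict_left_mono) auto
  ultimately show ?thesis by (simp add: algebra_simps)
qed

lemma rescaled_radius_le:
  fixes c s d R \<epsilon> \<theta> :: real
  assumes c: "0 < c" and R: "0 < R" and d: "0 \<le> d" and s: "c / 2 < s" "\<bar>s - c\<bar> < \<theta>"
    and sd: "s * d \<le> R - \<epsilon>" and err: "2 * \<theta> * (R / c + 1) \<le> \<epsilon>"
  shows "c * d \<le> R"
proof -
  have "0 < 2 * \<theta> * (R / c + 1)" using s(2) R c by (simp add: add_pos_pos)
  then have "c / 2 * d \<le> R" using mult_right_mono[of "c / 2" s d] s(1) d sd err by linarith
  then have "d \<le> 2 * (R / c + 1)" using c by (simp add: field_simps)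
  then have "\<bar>s - c\<bar> * d \<le> 2 * \<theta> * (R / c + 1)"
    using mult_mono[of "\<bar>s - c\<bar>" \<theta> d "2 * (R / c + 1)"] s(2) d by (simp add: algebra_simps)
  moreover have "(c - s) * d \<le> \<bar>s - c\<bar> * d" using d by (intro mult_right_mono) auto
  ultimately show ?thesis using sd err left_diff_distrib[of c s d] by linarith
qed

definition pGH_approx ::
  "'a set \<Rightarrow> ('a \<Rightarrow> 'a \<Rightarrow> real) \<Rightarrow> 'a \<Rightarrow> 'b set \<Rightarrow> ('b \<Rightarrow> 'b \<Rightarrow> real) \<Rightarrow> 'b
     \<Rightarrow> real \<Rightarrow> real \<Rightarrow> ('a \<Rightarrow> 'b) \<Rightarrow> bool" where
  "pGH_approx X dX p Y dY q R \<epsilon> f \<longleftrightarrow>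
     f ` cball_in X dX p R \<subseteq> Y \<and> f p = q \<and>
     (\<forall>a\<in>cball_in X dX p R. \<forall>b\<in>cball_in X dX p R. \<bar>dY (f a) (f b) - dX a b\<bar> < \<epsilon>) \<and>
     (\<forall>y\<in>cball_in Y dY q (R - \<epsilon>). \<exists>a\<in>cball_in X dX p R. dY y (f a) < \<epsilon>)"

lemma pGH_conv_iff_pGH_approx:
  "pGH_conv Xs ds ps Y dY y \<longleftrightarrow>
     (\<forall>R>0. \<forall>\<epsilon>>0. \<forall>\<^sub>F n in sequentially. \<exists>f. pGH_approx (Xs n) (ds n) (ps n) Y dY y R \<epsilon> f)"
  by (simp add: pGH_conv_def pGH_approx_def eventually_sequentially)

lemma pGH_approxI:
  assumes "\<And>a. a \<in> X \<Longrightarrow> dX p a \<le> R \<Longrightarrow> f a \<in> Y" "f p = q"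
    and "\<And>a b. a \<in> X \<Longrightarrow> b \<in> X \<Longrightarrow> dX p a \<le> R \<Longrightarrow> dX p b \<le> R
           \<Longrightarrow> \<bar>dY (f a) (f b) - dX a b\<bar> < \<epsilon>"
    and "\<And>y. y \<in> Y \<Longrightarrow> dY q y \<le> R - \<epsilon> \<Longrightarrow> \<exists>a\<in>X. dX p a \<le> R \<and> dY y (f a) < \<epsilon>"
  shows "pGH_approx X dX p Y dY q R \<epsilon> f"
  using assms unfolding pGH_approx_def cball_in_def by blast

lemma pGH_approxD:
  assumes "pGH_approx X dX p Y dY q R \<epsilon> f"
  shows pGH_approx_in: "\<And>a. a \<in> X \<Longrightarrow> dX p a \<le> R \<Longrightarrow> f a \<in> Y"
    and pGH_approx_base: "f p = q"
    and pGH_approx_distortion: "\<And>a b. a \<in> X \<Longrightarrow> b \<in> X \<Longrightarrow> dX p a \<le> R \<Longrightarrow> dX p b \<le> R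
           \<Longrightarrow> \<bar>dY (f a) (f b) - dX a b\<bar> < \<epsilon>"
    and pGH_approx_dense: "\<And>y. y \<in> Y \<Longrightarrow> dY q y \<le> R - \<epsilon> \<Longrightarrow> \<exists>a\<in>X. dX p a \<le> R \<and> dY y (f a) < \<epsilon>"
  using assms unfolding pGH_approx_def cball_in_def by blast+

lemma pGH_approx_isometry:
  assumes Y: "Metric_space Y dY" and g: "bij_betw g X Y" and p: "p \<in> X" "g p = q"
    and iso: "\<And>a b. a \<in> X \<Longrightarrow> b \<in> X \<Longrightarrow> dY (g a) (g b) = dX a b" and \<epsilon>: "0 < \<epsilon>"
  shows "pGH_approx X dX p Y dY q R \<epsilon> g"
proof (rule pGH_approxI)
  interpret Y: Metric_space Y dY by (rule Y)
  show "g a \<in> Y" if "a \<in> X" for a using g that by (rule bij_betw_apply)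
  show "\<bar>dY (g a) (g b) - dX a b\<bar> < \<epsilon>" if "a \<in> X" "b \<in> X" for a b
    using that iso \<epsilon> by simp
  fix b assume b: "b \<in> Y" "dY q b \<le> R - \<epsilon>"
  then obtain a where a: "a \<in> X" "b = g a" using g unfolding bij_betw_def by blast
  then have "dX p a \<le> R" using b iso[OF p(1) a(1)] p \<epsilon> by simp
  moreover have "dY b (g a) = 0" using a g by (simp add: bij_betw_apply)
  ultimately show "\<exists>a\<in>X. dX p a \<le> R \<and> dY b (g a) < \<epsilon>" using a(1) \<epsilon> by auto
qed (rule p(2))

lemma pGH_approx_pos:
  assumes f: "pGH_approx X dX p Y dY q R \<epsilon> f"
    and "Metric_space X dX" "Metric_space Y dY" "p \<in> X" "0 \<le> R"
  shows "0 < \<epsilon>"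
proof -
  interpret X: Metric_space X dX by fact
  interpret Y: Metric_space Y dY by fact
  show ?thesis
    using pGH_approx_distortion[OF f \<open>p \<in> X\<close> \<open>p \<in> X\<close>] pGH_approx_in[OF f \<open>p \<in> X\<close>] assms(4,5)
    by simp
qed

lemma pGH_approx_dist_base:
  assumes f: "pGH_approx X dX p Y dY q R \<epsilon> f"
    and X: "Metric_space X dX" "p \<in> X" and R: "0 \<le> R" and a: "a \<in> X" "dX p a \<le> R"
  shows "f a \<in> Y \<and> \<bar>dY q (f a) - dX p a\<bar> < \<epsilon>"
proof -
  interpret X: Metric_space X dX by (rule X(1))
  show ?thesis
    using pGH_approx_in[OF f a] pGH_approx_distortion[OF f X(2) a(1) _ a(2)] pGH_approx_base[OF f]
      X(2) R by simp
qed

lemma pGH_approx_compose: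
  assumes X': "Metric_space X' dX'" "p' \<in> X'" and X: "Metric_space X dX" "p \<in> X"
    and Y: "Metric_space Y dY"
    and f: "pGH_approx X dX p Y dY q R' \<epsilon> f" and h: "pGH_approx X' dX' p' X dX p R \<eta> h"
    and R: "0 \<le> R" "R + \<eta> \<le> R'"
  shows "pGH_approx X' dX' p' Y dY q R (2 * \<epsilon> + \<eta>) (f \<circ> h)"
proof -
  interpret X: Metric_space X dX by (rule X(1))
  interpret Y: Metric_space Y dY by (rule Y)
  have \<eta>: "0 < \<eta>" using pGH_approx_pos[OF h X'(1) X(1) X'(2) R(1)] .
  have \<epsilon>: "0 < \<epsilon>" using pGH_approx_pos[OF f X(1) Y X(2)] R \<eta> by simp
  have q: "q \<in> Y" using pGH_approx_dist_base[OF f X, of p] R \<eta> X(2) pGH_approx_base[OF f]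
    by simp
  have hB: "h a \<in> X \<and> dX p (h a) \<le> R'" if "a \<in> X'" "dX' p' a \<le> R" for a
    using pGH_approx_dist_base[OF h X' R(1) that] R(2) that(2) by (simp add: abs_less_iff)
  show ?thesis
  proof (rule pGH_approxI)
    show "(f \<circ> h) a \<in> Y" if "a \<in> X'" "dX' p' a \<le> R" for a
      using hB[OF that] pGH_approx_in[OF f] by simp
    show "(f \<circ> h) p' = q" using pGH_approx_base[OF f] pGH_approx_base[OF h] by simp
  next
    fix a b assume a: "a \<in> X'" "dX' p' a \<le> R" and b: "b \<in> X'" "dX' p' b \<le> R"
    have "\<bar>dY (f (h a)) (f (h b)) - dX (h a) (h b)\<bar> < \<epsilon>"
      using hB[OF a] hB[OF b] by (intro pGH_approx_distortion[OF f]) auto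
    moreover have "\<bar>dX (h a) (h b) - dX' a b\<bar> < \<eta>"
      by (rule pGH_approx_distortion[OF h a(1) b(1) a(2) b(2)])
    ultimately show "\<bar>dY ((f \<circ> h) a) ((f \<circ> h) b) - dX' a b\<bar> < 2 * \<epsilon> + \<eta>" using \<epsilon> by simp
  next
    fix y assume y: "y \<in> Y" "dY q y \<le> R - (2 * \<epsilon> + \<eta>)"
    then obtain u where u: "u \<in> X" "dX p u \<le> R'" and yu: "dY y (f u) < \<epsilon>"
      using pGH_approx_dense[OF f y(1)] R \<epsilon> \<eta> by auto
    have fu: "f u \<in> Y" "\<bar>dY q (f u) - dX p u\<bar> < \<epsilon>"
      using pGH_approx_dist_base[OF f X _ u] R \<eta> by auto
    have "dY q (f u) \<le> dY q y + dY y (f u)" by (rule Y.triangle[OF q y(1) fu(1)])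
    then have "dX p u \<le> R - \<eta>" using y yu fu by linarith
    then obtain a where a: "a \<in> X'" "dX' p' a \<le> R" and ua: "dX u (h a) < \<eta>"
      using pGH_approx_dense[OF h u(1)] by blast
    have "\<bar>dY (f u) (f (h a)) - dX u (h a)\<bar> < \<epsilon>"
      using hB[OF a] u by (intro pGH_approx_distortion[OF f]) auto
    moreover have "dY y (f (h a)) \<le> dY y (f u) + dY (f u) (f (h a))"
      using hB[OF a] by (intro Y.triangle[OF y(1) fu(1) pGH_approx_in[OF f]]) auto
    ultimately have "dY y (f (h a)) < 2 * \<epsilon> + \<eta>" using yu ua by linarith
    then show "\<exists>a\<in>X'. dX' p' a \<le> R \<and> dY y ((f \<circ> h) a) < 2 * \<epsilon> + \<eta>" using a by auto
  qed
qed

locale pGH_approx_sequence =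
  X: Metric_space X dX + Y: Metric_space Y dY
  for X :: "'a set" and dX and Y :: "'b set" and dY +
  fixes p :: 'a and q :: 'b and R \<epsilon> :: "nat \<Rightarrow> real"
    and f :: "nat \<Rightarrow> 'a \<Rightarrow> 'b" and g :: "nat \<Rightarrow> 'b \<Rightarrow> 'a"
  assumes p: "p \<in> X" and q: "q \<in> Y"
    and R_pos: "\<And>k. 0 < R k" and R_to_top: "filterlim R at_top sequentially"
    and \<epsilon>_to_0: "\<epsilon> \<longlonglongrightarrow> 0"
    and f_approx: "\<And>k. pGH_approx X dX p Y dY q (R k) (\<epsilon> k) (f k)"
    and g_approx: "\<And>k b. b \<in> Y \<Longrightarrow> dY q b \<le> R k - \<epsilon> k \<Longrightarrow>
                     g k b \<in> X \<and> dX p (g k b) \<le> R k \<and> dY b (f k (g k b)) < \<epsilon> k"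
begin

lemma \<epsilon>_pos: "0 < \<epsilon> k"
  using pGH_approx_pos[OF f_approx X.Metric_space_axioms Y.Metric_space_axioms p] R_pos[of k] by simp

lemma eventually_le_radius: "\<forall>\<^sub>F k in sequentially. c \<le> R k - \<epsilon> k \<and> \<epsilon> k < 1"
proof -
  have "\<forall>\<^sub>F k in sequentially. c + 1 \<le> R k"
    using R_to_top by (simp add: filterlim_at_top)
  moreover have "\<forall>\<^sub>F k in sequentially. \<epsilon> k < 1"
    using order_tendstoD(2)[OF \<epsilon>_to_0] by simp
  ultimately show ?thesis by eventually_elim simp
qed

lemma eventually_f_distortion:
  assumes "a \<in> X" "b \<in> X"
  shows "\<forall>\<^sub>F k in sequentially. \<bar>dY (f k a) (f k b) - dX a b\<bar> < \<epsilon> k"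
  using eventually_le_radius[of "max (dX p a) (dX p b)"]
proof eventually_elim
  case (elim k)
  then show ?case using pGH_approx_distortion[OF f_approx assms] \<epsilon>_pos[of k] by simp
qed

lemma eventually_f_in_mcball:
  assumes a: "a \<in> X"
  shows "\<forall>\<^sub>F k in sequentially. f k a \<in> Y.mcball q (dX p a + 1)"
  using eventually_le_radius[of "dX p a"] eventually_f_distortion[OF p a]
proof eventually_elim
  case (elim k)
  then have "dX p a \<le> R k" using \<epsilon>_pos[of k] by simp
  then show ?case
    using elim pGH_approx_in[OF f_approx a] pGH_approx_base[OF f_approx] q
    by (auto simp: abs_less_iff)
qed

lemma eventually_g_in_mcball:
  assumes b: "b \<in> Y"
  shows "\<forall>\<^sub>F k in sequentially. g k b \<in> X.mcball p (dY q b + 2)"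
  using eventually_le_radius[of "dY q b"]
proof eventually_elim
  case (elim k)
  then have g: "g k b \<in> X" "dX p (g k b) \<le> R k" "dY b (f k (g k b)) < \<epsilon> k"
    using g_approx[OF b] by auto
  have "\<bar>dY q (f k (g k b)) - dX p (g k b)\<bar> < \<epsilon> k"
    using pGH_approx_distortion[OF f_approx[of k] p g(1)] pGH_approx_base[OF f_approx]
      g(2) p R_pos[of k]
    by simp
  moreover have "dY q (f k (g k b)) \<le> dY q b + dY b (f k (g k b))"
    using pGH_approx_in[OF f_approx g(1,2)] by (intro Y.triangle q b)
  ultimately show ?case using g elim p by (simp add: abs_less_iff)
qed

end

locale pGH_approx_limit = pGH_approx_sequence +
  fixes G :: "nat filter" and f_lim :: "'a \<Rightarrow> 'b" and g_lim :: "'b \<Rightarrow> 'a"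
  assumes G: "G \<noteq> bot" "G \<le> sequentially"
    and f_lim: "\<And>a. a \<in> X \<Longrightarrow> f_lim a \<in> Y \<and> ((\<lambda>k. dY (f k a) (f_lim a)) \<longlongrightarrow> 0) G"
    and g_lim: "\<And>b. b \<in> Y \<Longrightarrow> g_lim b \<in> X \<and> ((\<lambda>k. dX (g k b) (g_lim b)) \<longlongrightarrow> 0) G"
begin

lemma \<epsilon>_to_0_G: "(\<epsilon> \<longlongrightarrow> 0) G"
  using tendsto_mono[OF G(2) \<epsilon>_to_0] .

lemma f_lim_base: "f_lim p = q"
proof -
  have "dY q (f_lim p) = 0"
  proof (rule eq_0_if_eventually_le_null[OF G(1)])
    show "((\<lambda>k. dY (f k p) (f_lim p)) \<longlongrightarrow> 0) G" using f_lim[OF p] by blast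
  qed (simp_all add: pGH_approx_base[OF f_approx])
  then show ?thesis using f_lim[OF p] q by simp
qed

lemma f_lim_isometric:
  assumes a: "a \<in> X" and b: "b \<in> X"
  shows "dY (f_lim a) (f_lim b) = dX a b"
proof -
  have "\<bar>dY (f_lim a) (f_lim b) - dX a b\<bar> = 0"
  proof (rule eq_0_if_eventually_le_null[OF G(1)])
    show "((\<lambda>k. dY (f k a) (f_lim a) + dY (f k b) (f_lim b) + \<epsilon> k) \<longlongrightarrow> 0) G"
      using f_lim[OF a] f_lim[OF b] \<epsilon>_to_0_G by (intro tendsto_add_zero) auto
    show "\<forall>\<^sub>F k in G. \<bar>dY (f_lim a) (f_lim b) - dX a b\<bar>
        \<le> dY (f k a) (f_lim a) + dY (f k b) (f_lim b) + \<epsilon> k"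
      using filter_leD[OF G(2) eventually_f_distortion[OF a b]]
        filter_leD[OF G(2) eventually_f_in_mcball[OF a]]
        filter_leD[OF G(2) eventually_f_in_mcball[OF b]]
    proof eventually_elim
      case (elim k)
      then have "\<bar>dY (f_lim a) (f_lim b) - dY (f k a) (f k b)\<bar>
          \<le> dY (f_lim a) (f k a) + dY (f_lim b) (f k b)"
        using f_lim a b by (intro Y.mdist_diff_le) auto
      then show ?case using elim by (simp add: Y.commute)
    qed
  qed simp
  then show ?thesis by simp
qed

lemma f_lim_g_lim:
  assumes b: "b \<in> Y"
  shows "f_lim (g_lim b) = b"
proof -
  define a where "a = g_lim b"
  have a: "a \<in> X" using g_lim[OF b] by (simp add: a_def)
  have "dY (f_lim a) b = 0"
  proof (rule eq_0_if_eventually_le_null[OF G(1)])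
    show "((\<lambda>k. dY (f k a) (f_lim a) + (dX (g k b) a + \<epsilon> k) + \<epsilon> k) \<longlongrightarrow> 0) G"
      using f_lim[OF a] g_lim[OF b] \<epsilon>_to_0_G unfolding a_def by (intro tendsto_add_zero) auto
    show "\<forall>\<^sub>F k in G. dY (f_lim a) b \<le> dY (f k a) (f_lim a) + (dX (g k b) a + \<epsilon> k) + \<epsilon> k"
      using filter_leD[OF G(2) eventually_le_radius[of "max (dX p a) (dY q b)"]]
    proof eventually_elim
      case (elim k)
      then have g: "g k b \<in> X" "dX p (g k b) \<le> R k" "dY b (f k (g k b)) < \<epsilon> k"
        using g_approx[OF b] by auto
      have aR: "dX p a \<le> R k" using elim \<epsilon>_pos[of k] by simp
      have fa: "f k a \<in> Y" and fg: "f k (g k b) \<in> Y"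
        using pGH_approx_in[OF f_approx] a aR g by auto
      have "\<bar>dY (f k a) (f k (g k b)) - dX a (g k b)\<bar> < \<epsilon> k"
        using pGH_approx_distortion[OF f_approx a g(1) aR g(2)] .
      moreover have "dY (f_lim a) b \<le> dY (f_lim a) (f k a) + dY (f k a) b"
        using f_lim[OF a] fa b by (intro Y.triangle) auto
      moreover have "dY (f k a) b \<le> dY (f k a) (f k (g k b)) + dY (f k (g k b)) b"
        using fa fg b by (rule Y.triangle)
      ultimately show ?case using g(3) by (simp add: Y.commute X.commute abs_less_iff)
    qed
  qed simp
  then show ?thesis using f_lim[OF a] b by (simp add: a_def)
qed

lemma g_lim_f_lim:
  assumes a: "a \<in> X"
  shows "g_lim (f_lim a) = a"
proof -
  define b where "b = f_lim a"
  have b: "b \<in> Y" using f_lim[OF a] by (simp add: b_def)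
  have "dX (g_lim b) a = 0"
  proof (rule eq_0_if_eventually_le_null[OF G(1)])
    show "((\<lambda>k. dX (g k b) (g_lim b) + (\<epsilon> k + dY (f k a) b + \<epsilon> k)) \<longlongrightarrow> 0) G"
      using f_lim[OF a] g_lim[OF b] \<epsilon>_to_0_G unfolding b_def by (intro tendsto_add_zero) auto
    show "\<forall>\<^sub>F k in G. dX (g_lim b) a \<le> dX (g k b) (g_lim b) + (\<epsilon> k + dY (f k a) b + \<epsilon> k)"
      using filter_leD[OF G(2) eventually_le_radius[of "max (dX p a) (dY q b)"]]
    proof eventually_elim
      case (elim k)
      then have g: "g k b \<in> X" "dX p (g k b) \<le> R k" "dY b (f k (g k b)) < \<epsilon> k"
        using g_approx[OF b] by auto
      have aR: "dX p a \<le> R k" using elim \<epsilon>_pos[of k] by simp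
      have "\<bar>dY (f k (g k b)) (f k a) - dX (g k b) a\<bar> < \<epsilon> k"
        using pGH_approx_distortion[OF f_approx g(1) a g(2) aR] .
      moreover have "dY (f k (g k b)) (f k a) \<le> dY b (f k (g k b)) + dY b (f k a)"
        using pGH_approx_in[OF f_approx] a aR g b Y.triangle'' by blast
      moreover have "dX (g_lim b) a \<le> dX (g_lim b) (g k b) + dX (g k b) a"
        using g_lim[OF b] g a X.triangle by blast
      ultimately show ?case using g(3) by (simp add: Y.commute X.commute abs_less_iff)
    qed
  qed simp
  then show ?thesis using g_lim[OF b] a by (simp add: b_def)
qed

lemma f_lim_pointed_isometric: "pointed_isometric X dX p Y dY q"
  unfolding pointed_isometric_def
proof (intro exI conjI ballI)
  show "bij_betw f_lim X Y"
    by (rule bij_betw_byWitness[where f' = g_lim]) (use f_lim g_lim f_lim_g_lim g_lim_f_lim in auto)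
qed (simp_all add: f_lim_base f_lim_isometric)

end

lemma (in pGH_approx_sequence) pointed_isometric_if_proper:
  assumes "\<And>r. compactin X.mtopology (X.mcball p r)" "\<And>r. compactin Y.mtopology (Y.mcball q r)"
  shows "pointed_isometric X dX p Y dY q"
proof -
  have ne: "Y.mcball q (dX p a + 1) \<noteq> {}" "X.mcball p (dY q b + 2) \<noteq> {}" for a b
    using p q by (simp_all add: X.mcball_eq_empty Y.mcball_eq_empty not_less add_nonneg_nonneg)
  obtain G1 f_lim where G1: "G1 \<noteq> bot" "G1 \<le> sequentially"
    and f_lim: "\<forall>a\<in>X. f_lim a \<in> Y.mcball q (dX p a + 1) \<and> ((\<lambda>k. dY (f k a) (f_lim a)) \<longlongrightarrow> 0) G1"
    using Y.pointwise_limit_subfilter[of sequentially X "\<lambda>a. Y.mcball q (dX p a + 1)" f]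
      sequentially_bot assms(2) ne(1) eventually_f_in_mcball by blast
  obtain G2 g_lim where G2: "G2 \<noteq> bot" "G2 \<le> G1"
    and g_lim: "\<forall>b\<in>Y. g_lim b \<in> X.mcball p (dY q b + 2) \<and> ((\<lambda>k. dX (g k b) (g_lim b)) \<longlongrightarrow> 0) G2"
    using X.pointwise_limit_subfilter[of G1 Y "\<lambda>b. X.mcball p (dY q b + 2)" g]
      G1 assms(1) ne(2) filter_leD[OF G1(2) eventually_g_in_mcball] by blast
  interpret pGH_approx_limit X dX Y dY p q R \<epsilon> f g G2 f_lim g_lim
  proof
    show "G2 \<le> sequentially" using G1(2) G2(2) by (rule order_trans[rotated])
    show "f_lim a \<in> Y \<and> ((\<lambda>k. dY (f k a) (f_lim a)) \<longlongrightarrow> 0) G2" if "a \<in> X" for a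
      using f_lim that tendsto_mono[OF G2(2)] by auto
    show "g_lim b \<in> X \<and> ((\<lambda>k. dX (g k b) (g_lim b)) \<longlongrightarrow> 0) G2" if "b \<in> Y" for b
      using g_lim that by auto
  qed (rule G2(1))
  show ?thesis by (rule f_lim_pointed_isometric)
qed

lemma pGH_approx_sequence_exists:
  assumes X: "Metric_space X dX" "p \<in> X" and Y: "Metric_space Y dY" "q \<in> Y"
    and approx: "\<And>R \<epsilon>. 0 < R \<Longrightarrow> 0 < \<epsilon> \<Longrightarrow> \<exists>f. pGH_approx X dX p Y dY q R \<epsilon> f"
  obtains R \<epsilon> f g where "pGH_approx_sequence X dX Y dY p q R \<epsilon> f g"
proof -
  define R :: "nat \<Rightarrow> real" where "R k = real (Suc k)" for k
  define \<epsilon> :: "nat \<Rightarrow> real" where "\<epsilon> k = inverse (real (Suc k))" for k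
  define f where "f k = (SOME f. pGH_approx X dX p Y dY q (R k) (\<epsilon> k) f)" for k
  have f: "pGH_approx X dX p Y dY q (R k) (\<epsilon> k) (f k)" for k
  proof -
    have "\<exists>f. pGH_approx X dX p Y dY q (R k) (\<epsilon> k) f" by (rule approx) (simp_all add: R_def \<epsilon>_def)
    then show ?thesis unfolding f_def by (rule someI_ex)
  qed
  define g where "g k b = (SOME a. a \<in> X \<and> dX p a \<le> R k \<and> dY b (f k a) < \<epsilon> k)" for k b
  have g: "g k b \<in> X \<and> dX p (g k b) \<le> R k \<and> dY b (f k (g k b)) < \<epsilon> k"
    if "b \<in> Y" "dY q b \<le> R k - \<epsilon> k" for k b
  proof -
    have "\<exists>a. a \<in> X \<and> dX p a \<le> R k \<and> dY b (f k a) < \<epsilon> k"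
      using pGH_approx_dense[OF f that] by blast
    then show ?thesis unfolding g_def by (rule someI_ex)
  qed
  have "filterlim R at_top sequentially"
    unfolding R_def by (rule filterlim_compose[OF filterlim_real_sequentially filterlim_Suc])
  moreover have "\<epsilon> \<longlonglongrightarrow> 0" unfolding \<epsilon>_def by (rule LIMSEQ_inverse_real_of_nat)
  ultimately have "pGH_approx_sequence X dX Y dY p q R \<epsilon> f g"
    unfolding pGH_approx_sequence_def pGH_approx_sequence_axioms_def
    using X Y f g by (simp add: R_def)
  then show thesis by (rule that)
qed

theorem pointed_isometric_if_pGH_approx:
  assumes X: "proper_metric X dX" "p \<in> X" and Y: "proper_metric Y dY" "q \<in> Y"
    and approx: "\<And>R \<epsilon>. 0 < R \<Longrightarrow> 0 < \<epsilon> \<Longrightarrow> \<exists>f. pGH_approx X dX p Y dY q R \<epsilon> f"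
  shows "pointed_isometric X dX p Y dY q"
proof -
  have "Metric_space X dX" "Metric_space Y dY" using X Y by (simp_all add: proper_metric_def)
  then obtain R \<epsilon> f g where "pGH_approx_sequence X dX Y dY p q R \<epsilon> f g"
    using pGH_approx_sequence_exists[OF _ X(2) _ Y(2) approx] by blast
  then show ?thesis
    by (rule pGH_approx_sequence.pointed_isometric_if_proper) (use X Y in \<open>simp_all add: proper_metric_def\<close>)
qed

lemma power_nat_floor_log_bounds:
  fixes b T :: real
  assumes "1 < b" "1 \<le> T"
  shows "b ^ nat \<lfloor>log b T\<rfloor> \<le> T \<and> T < b ^ Suc (nat \<lfloor>log b T\<rfloor>)"
proof -
  have k: "0 \<le> \<lfloor>log b T\<rfloor>" using assms by simp
  have "b powr \<lfloor>log b T\<rfloor> \<le> T \<and> T < b powr (\<lfloor>log b T\<rfloor> + 1)"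
    using floor_log_eq_powr_iff[of T b "\<lfloor>log b T\<rfloor>"] assms by simp
  moreover have "b powr \<lfloor>log b T\<rfloor> = b ^ nat \<lfloor>log b T\<rfloor>"
    and "b powr (\<lfloor>log b T\<rfloor> + 1) = b ^ Suc (nat \<lfloor>log b T\<rfloor>)"
    using k assms by (simp_all add: powr_realpow[symmetric] powr_add mult.commute)
  ultimately show ?thesis by simp
qed

lemma power_scale_decomposition:
  fixes r :: real and t :: "nat \<Rightarrow> real"
  assumes r: "0 < r" "r < 1" and t: "filterlim t at_top sequentially"
  obtains n s where "filterlim n at_top sequentially" "\<And>k. s k \<in> {1..1/r}"
    "\<forall>\<^sub>F k in sequentially. t k * r ^ n k = s k"
proof
  define T where "T k = max 1 (t k)" for k
  define n where "n k = nat \<lfloor>log (1/r) (T k)\<rfloor>" for k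
  have b: "1 < 1/r" using r by simp
  have bounds: "(1/r) ^ n k \<le> T k" "T k < (1/r) ^ Suc (n k)" for k
    using power_nat_floor_log_bounds[OF b, of "T k"] by (simp_all add: n_def T_def)
  show "filterlim n at_top sequentially"
    unfolding filterlim_at_top
  proof
    fix N
    have "\<forall>\<^sub>F k in sequentially. (1/r) ^ N \<le> t k" using t by (simp add: filterlim_at_top)
    then show "\<forall>\<^sub>F k in sequentially. N \<le> n k"
    proof eventually_elim
      case (elim k)
      then have "(1/r) ^ N < (1/r) ^ Suc (n k)" using bounds(2)[of k] by (simp add: T_def)
      then have "N < Suc (n k)" by (rule power_less_imp_less_exp[OF b])
      then show ?case by simp
    qed
  qed
  show "T k * r ^ n k \<in> {1..1/r}" for k
    using bounds[of k] r by (simp add: power_one_over field_simps)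
  have "\<forall>\<^sub>F k in sequentially. 1 \<le> t k" using t by (simp add: filterlim_at_top)
  then show "\<forall>\<^sub>F k in sequentially. t k * r ^ n k = T k * r ^ n k"
    by eventually_elim (simp add: T_def)
qed

lemma eventually_incseq_approximates_compact:
  fixes A :: "nat \<Rightarrow> 'a::metric_space set"
  assumes A: "incseq A" and K: "compact K" "K \<subseteq> closure (\<Union>n. A n)" and \<delta>: "0 < \<delta>"
  shows "\<forall>\<^sub>F n in sequentially. \<forall>z\<in>K. \<exists>a\<in>A n. dist z a < \<delta>"
proof -
  define U where "U n = (\<Union>a\<in>A n. ball a \<delta>)" for n
  have cover: "K \<subseteq> (\<Union>n. U n)"
  proof
    fix z assume "z \<in> K"
    then have "z \<in> closure (\<Union>n. A n)" using K(2) by blast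
    then have "\<exists>a\<in>(\<Union>n. A n). dist a z < \<delta>"
      using \<delta> unfolding closure_approachable by blast
    then obtain a where "a \<in> (\<Union>n. A n)" "dist a z < \<delta>" ..
    then show "z \<in> (\<Union>n. U n)" by (auto simp: U_def)
  qed
  have "open (U n)" for n by (simp add: U_def open_UN)
  then obtain C where C: "finite C" "K \<subseteq> (\<Union>n\<in>C. U n)"
    by (rule compactE_image[OF K(1) _ cover])
  have "\<forall>z\<in>K. \<exists>a\<in>A n. dist z a < \<delta>" if n: "Max (insert 0 C) \<le> n" for n
  proof
    have "A m \<subseteq> A n" if "m \<in> C" for m
    proof -
      have "m \<le> n" using Max_ge[of "insert 0 C" m] C(1) that n by simp
      then show ?thesis by (rule monoD[OF A])
    qed
    then have "U m \<subseteq> U n" if "m \<in> C" for m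
      using that unfolding U_def by (intro UN_mono) auto
    then have "K \<subseteq> U n" using C(2) by blast
    fix z assume "z \<in> K"
    with \<open>K \<subseteq> U n\<close> have "z \<in> U n" by blast
    then obtain a where "a \<in> A n" "dist a z < \<delta>" by (auto simp: U_def)
    then show "\<exists>a\<in>A n. dist z a < \<delta>" by (auto simp: dist_commute)
  qed
  then show ?thesis unfolding eventually_sequentially by blast
qed

lemma similarity_bij:
  fixes w :: "'a::euclidean_space \<Rightarrow> 'a"
  assumes r: "0 < r" and w: "\<And>a b. dist (w a) (w b) = r * dist a b"
  shows "bij w"
proof -
  \<comment> \<open>Normalising w gives an isometry fixing 0, which is linear.\<close>
  define u where "u z = (1 / r) *\<^sub>R (w z - w 0)" for z
  have "dist (u a) (u b) = dist a b" for a b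
  proof -
    have "u a - u b = (1 / r) *\<^sub>R (w a - w b)" by (simp add: u_def algebra_simps)
    then show ?thesis using w[of a b] r by (simp add: dist_norm)
  qed
  then have "linear u" "inj u"
    by (auto intro!: isometry_linear injI simp: u_def) (metis dist_eq_0_iff)
  then have "surj u" by (rule linear_inj_imp_surj)
  have "y \<in> range w" for y
  proof -
    obtain z where "u z = (1 / r) *\<^sub>R (y - w 0)" using \<open>surj u\<close> by (metis surjD)
    then have "w z = y" using r by (simp add: u_def)
    then show ?thesis by blast
  qed
  moreover have "inj w" using w r by (metis dist_eq_0_iff injI mult_eq_0_iff less_irrefl)
  ultimately show ?thesis by (auto simp: bij_def)
qed

locale similarity_invariant_set =
  fixes w :: "'a::euclidean_space \<Rightarrow> 'a" and r :: real and F :: "'a set" and x :: 'a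
  assumes ratio: "0 < r" "r < 1" and similarity: "\<And>a b. dist (w a) (w b) = r * dist a b"
    and fixed: "w x = x" and invariant: "w ` F \<subseteq> F" and F: "compact F" "F \<noteq> {}"
begin

definition blowup :: "nat \<Rightarrow> 'a set" where
  "blowup n = (w ^^ n) -` F"

definition Z :: "'a set" where
  "Z = closure (\<Union>n. blowup n)"

lemma dist_iterate: "dist ((w ^^ n) a) ((w ^^ n) b) = r ^ n * dist a b"
  by (induction n) (simp_all add: similarity)

lemma iterate_fixed: "(w ^^ n) x = x"
  by (induction n) (simp_all add: fixed)

lemma iterate_in: "a \<in> F \<Longrightarrow> (w ^^ n) a \<in> F"
  by (induction n) (use invariant in auto)

lemma bij_iterate: "bij (w ^^ n)"
  by (rule similarity_bij[of "r ^ n"]) (simp_all add: ratio dist_iterate)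

lemma iterate_inv: "(w ^^ n) (inv (w ^^ n) a) = a"
  and inv_iterate: "inv (w ^^ n) ((w ^^ n) a) = a"
  using bij_iterate[of n] by (simp_all add: bij_is_surj surj_f_inv_f bij_is_inj)

lemma dist_inv_iterate: "dist (inv (w ^^ n) a) (inv (w ^^ n) b) = dist a b / r ^ n"
  using dist_iterate[of n "inv (w ^^ n) a" "inv (w ^^ n) b"] ratio by (simp add: iterate_inv)

lemma fixed_in_F: "x \<in> F"
proof -
  obtain a where a: "a \<in> F" using F(2) by blast
  have "dist ((w ^^ n) a) x = r ^ n * dist a x" for n
    using dist_iterate[of n a x] by (simp add: iterate_fixed)
  moreover have "(\<lambda>n. r ^ n * dist a x) \<longlonglongrightarrow> 0"
    by (rule tendsto_mult_left_zero[OF LIMSEQ_power_zero]) (use ratio in simp)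
  ultimately have "(\<lambda>n. dist ((w ^^ n) a) x) \<longlonglongrightarrow> 0" by simp
  then have lim: "(\<lambda>n. (w ^^ n) a) \<longlonglongrightarrow> x" by (rule tendsto_dist_iff[THEN iffD2])
  show ?thesis by (rule closed_sequentially[OF compact_imp_closed[OF F(1)] iterate_in[OF a] lim])
qed

lemma incseq_blowup: "incseq blowup"
proof (rule incseq_SucI)
  fix n show "blowup n \<subseteq> blowup (Suc n)"
    using invariant by (auto simp: blowup_def)
qed

lemma fixed_in_blowup: "x \<in> blowup n"
  by (simp add: blowup_def iterate_fixed fixed_in_F)

lemma inv_iterate_in_blowup: "a \<in> F \<Longrightarrow> inv (w ^^ n) a \<in> blowup n"
  by (simp add: blowup_def iterate_inv)

lemma blowup_subset_Z: "blowup n \<subseteq> Z"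
  unfolding Z_def by (rule order_trans[OF _ closure_subset]) blast

lemma fixed_in_Z: "x \<in> Z"
  using fixed_in_blowup blowup_subset_Z by blast

lemma closed_Z: "closed Z"
  by (simp add: Z_def)

lemma eventually_blowup_approximates_Z:
  assumes "0 < \<delta>"
  shows "\<forall>\<^sub>F n in sequentially. \<forall>z\<in>Z. dist x z \<le> \<rho> \<longrightarrow> (\<exists>a\<in>blowup n. dist z a < \<delta>)"
proof -
  have "\<forall>\<^sub>F n in sequentially. \<forall>z\<in>Z \<inter> cball x \<rho>. \<exists>a\<in>blowup n. dist z a < \<delta>"
  proof (rule eventually_incseq_approximates_compact[OF incseq_blowup _ _ assms])
    show "compact (Z \<inter> cball x \<rho>)" by (simp add: closed_Z closed_Int_compact)
    show "Z \<inter> cball x \<rho> \<subseteq> closure (\<Union>n. blowup n)" by (simp add: Z_def)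
  qed
  then show ?thesis by eventually_elim auto
qed

lemma blowup_retraction:
  assumes dense: "\<forall>z\<in>Z. dist x z \<le> \<rho> \<longrightarrow> (\<exists>a\<in>blowup n. dist z a < \<delta>)" and \<delta>: "0 < \<delta>"
  obtains A where "A x = x" "\<And>z. z \<in> Z \<Longrightarrow> dist x z \<le> \<rho> \<Longrightarrow> A z \<in> blowup n \<and> dist z (A z) < \<delta>"
proof -
  define A where "A z = (if z = x then x else SOME a. a \<in> blowup n \<and> dist z a < \<delta>)" for z
  have "A x = x" by (simp add: A_def)
  moreover have "A z \<in> blowup n \<and> dist z (A z) < \<delta>" if "z \<in> Z" "dist x z \<le> \<rho>" for z
  proof (cases "z = x")
    case False
    have "\<exists>a. a \<in> blowup n \<and> dist z a < \<delta>" using dense that by blast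
    from someI_ex[OF this] show ?thesis using False by (simp add: A_def)
  qed (simp add: A_def fixed_in_blowup \<delta>)
  ultimately show thesis by (rule that)
qed

lemma eventually_pGH_approx_F_Z:
  assumes c: "0 < c" and \<epsilon>: "0 < \<epsilon>"
  shows "\<forall>\<^sub>F n in sequentially.
           pGH_approx F (\<lambda>a b. c / r ^ n * dist a b) x Z (\<lambda>a b. c * dist a b) x R \<epsilon> (inv (w ^^ n))"
  using eventually_blowup_approximates_Z[OF divide_pos_pos[OF \<epsilon> c], where \<rho> = "R / c"]
proof eventually_elim
  case (elim n)
  show ?case
  proof (rule pGH_approxI)
    show "inv (w ^^ n) a \<in> Z" if "a \<in> F" for a
      using inv_iterate_in_blowup[OF that] blowup_subset_Z by blast
    show "inv (w ^^ n) x = x" using inv_iterate[of n x] by (simp add: iterate_fixed)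
    show "\<bar>c * dist (inv (w ^^ n) a) (inv (w ^^ n) b) - c / r ^ n * dist a b\<bar> < \<epsilon>" for a b
      using \<epsilon> by (simp add: dist_inv_iterate)
  next
    fix z assume z: "z \<in> Z" "c * dist x z \<le> R - \<epsilon>"
    then have "dist x z \<le> R / c" using c \<epsilon> by (simp add: pos_le_divide_eq mult.commute)
    then obtain a where a: "a \<in> blowup n" "dist z a < \<epsilon> / c" using elim z(1) by blast
    have "c * dist z a < \<epsilon>" using a(2) c by (simp add: pos_less_divide_eq mult.commute)
    moreover have "c * dist x a \<le> c * dist x z + c * dist z a"
      using dist_triangle[of x a z] c by (simp add: distrib_left[symmetric])
    moreover have "c / r ^ n * dist x ((w ^^ n) a) = c * dist x a"
      using dist_iterate[of n x a] ratio by (simp add: iterate_fixed)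
    ultimately show "\<exists>u\<in>F. c / r ^ n * dist x u \<le> R \<and> c * dist z (inv (w ^^ n) u) < \<epsilon>"
      using a(1) z(2) by (intro bexI[of _ "(w ^^ n) a"]) (auto simp: inv_iterate blowup_def)
  qed
qed

lemma pGH_approx_Z_F:
  assumes c: "0 < c" and R: "0 < R" and \<delta>: "0 < \<delta>" "\<delta> \<le> 1" and \<theta>: "\<theta> \<le> c / 2"
    and err: "2 * \<theta> * (R / c + 1) + 2 * c * \<delta> \<le> \<epsilon>"
    and dense: "\<forall>z\<in>Z. dist x z \<le> R / c \<longrightarrow> (\<exists>a\<in>blowup n. dist z a < \<delta>)"
    and t: "\<bar>t * r ^ n - c\<bar> < \<theta>"
  shows "\<exists>h. pGH_approx Z (\<lambda>a b. c * dist a b) x F (\<lambda>a b. t * dist a b) x R \<epsilon> h"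
proof -
  have "0 < 2 * c * \<delta>" using c \<delta> by simp
  have "0 < 2 * \<theta> * (R / c + 1)" using t R c by (simp add: add_pos_pos)
  define s where "s = t * r ^ n"
  have s: "c / 2 < s" "s < 2 * c" "\<bar>s - c\<bar> < \<theta>" using t \<theta> by (auto simp: s_def abs_less_iff)
  have scale: "t * dist ((w ^^ n) a) ((w ^^ n) b) = s * dist a b" for a b
    by (simp add: dist_iterate s_def)
  have in_ball: "c * dist x z \<le> R \<longleftrightarrow> dist x z \<le> R / c" for z
    using c by (simp add: pos_le_divide_eq mult.commute)
  obtain A where A: "A x = x" "\<And>z. z \<in> Z \<Longrightarrow> dist x z \<le> R / c \<Longrightarrow> A z \<in> blowup n \<and> dist z (A z) < \<delta>"
    using blowup_retraction[OF dense \<delta>(1)] by blast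
  have A_bound: "dist x (A z) \<le> R / c + 1" if "z \<in> Z" "dist x z \<le> R / c" for z
    using dist_triangle[of x "A z" z] A(2)[OF that] that \<delta> by linarith
  show ?thesis
  proof (intro exI[of _ "(w ^^ n) \<circ> A"] pGH_approxI)
    show "((w ^^ n) \<circ> A) z \<in> F" if "z \<in> Z" "c * dist x z \<le> R" for z
      using A(2)[OF that(1)] that(2) by (simp add: in_ball blowup_def)
    show "((w ^^ n) \<circ> A) x = x" by (simp add: A(1) iterate_fixed)
  next
    fix z1 z2 assume "z1 \<in> Z" "c * dist x z1 \<le> R" "z2 \<in> Z" "c * dist x z2 \<le> R"
    then have z1: "z1 \<in> Z" "dist x z1 \<le> R / c" and z2: "z2 \<in> Z" "dist x z2 \<le> R / c"
      by (simp_all add: in_ball)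
    have "\<bar>s * dist (A z1) (A z2) - c * dist z1 z2\<bar> < 2 * \<theta> * (R / c + 1) + 2 * c * \<delta>"
      using A(2)[OF z1] A(2)[OF z2] s(3)
      by (intro abs_scaled_dist_diff_less[OF c, where x = x] A_bound[OF z1] A_bound[OF z2]) auto
    then have "\<bar>t * dist (((w ^^ n) \<circ> A) z1) (((w ^^ n) \<circ> A) z2) - c * dist z1 z2\<bar>
        < 2 * \<theta> * (R / c + 1) + 2 * c * \<delta>"
      by (simp add: scale)
    with err show "\<bar>t * dist (((w ^^ n) \<circ> A) z1) (((w ^^ n) \<circ> A) z2) - c * dist z1 z2\<bar> < \<epsilon>"
      by linarith
  next
    fix u assume u: "u \<in> F" "t * dist x u \<le> R - \<epsilon>"
    define z where "z = inv (w ^^ n) u"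
    have z: "z \<in> Z" "u = (w ^^ n) z"
      using inv_iterate_in_blowup[OF u(1)] blowup_subset_Z by (auto simp: z_def iterate_inv)
    have "s * dist x z \<le> R - \<epsilon>" using u(2) scale[of x z] by (simp add: z(2) iterate_fixed)
    moreover have "2 * \<theta> * (R / c + 1) \<le> \<epsilon>" using err \<open>0 < 2 * c * \<delta>\<close> by linarith
    ultimately have zR: "c * dist x z \<le> R"
      by (rule rescaled_radius_le[OF c R zero_le_dist s(1,3)])
    have "t * dist u (((w ^^ n) \<circ> A) z) = s * dist z (A z)" by (simp add: z(2) scale)
    also have "\<dots> \<le> s * \<delta>"
      using A(2)[OF z(1)] zR s c by (intro mult_left_mono) (auto simp: in_ball)
    also have "\<dots> < 2 * c * \<delta>" using s(2) \<delta>(1) by simp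
    also have "\<dots> \<le> \<epsilon>" using err \<open>0 < 2 * \<theta> * (R / c + 1)\<close> by linarith
    finally show "\<exists>z\<in>Z. c * dist x z \<le> R \<and> t * dist u (((w ^^ n) \<circ> A) z) < \<epsilon>"
      using z(1) zR by blast
  qed
qed

lemma eventually_pGH_approx_Z_F:
  assumes c: "0 < c" and R: "0 < R" and \<epsilon>: "0 < \<epsilon>"
  obtains \<theta> where "0 < \<theta>" "\<forall>\<^sub>F n in sequentially. \<forall>t. \<bar>t * r ^ n - c\<bar> < \<theta> \<longrightarrow>
    (\<exists>h. pGH_approx Z (\<lambda>a b. c * dist a b) x F (\<lambda>a b. t * dist a b) x R \<epsilon> h)"
proof
  define M where "M = R / c + 1"
  define \<delta> where "\<delta> = min 1 (\<epsilon> / (4 * c))"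
  define \<theta> where "\<theta> = min (c / 2) (\<epsilon> / (4 * M))"
  have M: "0 < M" using R c by (simp add: M_def add_pos_pos)
  have \<delta>: "0 < \<delta>" "\<delta> \<le> 1" "2 * c * \<delta> \<le> \<epsilon> / 2"
    using c \<epsilon> by (auto simp: \<delta>_def min_def field_simps)
  have \<theta>: "0 < \<theta>" "\<theta> \<le> c / 2" "2 * \<theta> * M \<le> \<epsilon> / 2"
    using c \<epsilon> M by (auto simp: \<theta>_def min_def field_simps)
  have err: "2 * \<theta> * (R / c + 1) + 2 * c * \<delta> \<le> \<epsilon>" using \<theta>(3) \<delta>(3) unfolding M_def by linarith
  show "0 < \<theta>" by (rule \<theta>(1))
  show "\<forall>\<^sub>F n in sequentially. \<forall>t. \<bar>t * r ^ n - c\<bar> < \<theta> \<longrightarrow>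
      (\<exists>h. pGH_approx Z (\<lambda>a b. c * dist a b) x F (\<lambda>a b. t * dist a b) x R \<epsilon> h)"
    using eventually_blowup_approximates_Z[OF \<delta>(1), where \<rho> = "R / c"]
  proof eventually_elim
    case (elim n)
    show ?case using pGH_approx_Z_F[OF c R \<delta>(1,2) \<theta>(2) err elim] by blast
  qed
qed

lemma tangent_set_if_pointed_isometric:
  assumes Y: "Metric_space Y dY" and c: "0 < c"
    and iso: "pointed_isometric Z (\<lambda>a b. c * dist a b) x Y dY y"
  shows "tangent_set F dist x Y dY y"
proof -
  obtain g where g: "bij_betw g Z Y" "g x = y"
    "\<And>a b. a \<in> Z \<Longrightarrow> b \<in> Z \<Longrightarrow> dY (g a) (g b) = c * dist a b"
    using iso unfolding pointed_isometric_def by blast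
  define t where "t k = c / r ^ k" for k
  have t_pos: "0 < t k" for k using c ratio by (simp add: t_def)
  have "filterlim t at_top sequentially"
    unfolding t_def using ratio c
    by (intro LIM_at_top_divide[OF tendsto_const _ LIMSEQ_power_zero]) simp_all
  moreover have "pGH_conv (\<lambda>k. F) (\<lambda>k a b. t k * dist a b) (\<lambda>k. x) Y dY y"
    unfolding pGH_conv_iff_pGH_approx
  proof (intro allI impI)
    fix R \<epsilon> :: real assume R: "0 < R" and \<epsilon>: "0 < \<epsilon>"
    have g_approx: "pGH_approx Z (\<lambda>a b. c * dist a b) x Y dY y (R + \<epsilon> / 2) (\<epsilon> / 4) g"
      using \<epsilon> by (intro pGH_approx_isometry[OF Y g(1) fixed_in_Z g(2) g(3)]) simp_all
    show "\<forall>\<^sub>F k in sequentially. \<exists>f. pGH_approx F (\<lambda>a b. t k * dist a b) x Y dY y R \<epsilon> f"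
      using eventually_pGH_approx_F_Z[OF c half_gt_zero[OF \<epsilon>], of R]
    proof eventually_elim
      case (elim k)
      have "pGH_approx F (\<lambda>a b. t k * dist a b) x Y dY y R (2 * (\<epsilon> / 4) + \<epsilon> / 2) (g \<circ> inv (w ^^ k))"
        using elim R
        by (intro pGH_approx_compose[OF Metric_space_scaled_dist[OF t_pos] fixed_in_F
              Metric_space_scaled_dist[OF c] fixed_in_Z Y g_approx]) (simp_all add: t_def)
      then show ?case by auto
    qed
  qed
  ultimately show ?thesis
    unfolding tangent_set_def using t_pos by blast
qed

lemma pGH_approx_Z_if_pGH_conv:
  assumes Y: "Metric_space Y dY" and c: "0 < c" and t: "\<And>k. 0 < t k"
    and conv: "pGH_conv (\<lambda>k. F) (\<lambda>k a b. t k * dist a b) (\<lambda>k. x) Y dY y"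
    and n: "filterlim n at_top sequentially"
    and G: "G \<noteq> bot" "G \<le> sequentially" and lim: "((\<lambda>k. t k * r ^ n k) \<longlongrightarrow> c) G"
    and R: "0 < R" and \<epsilon>: "0 < \<epsilon>"
  shows "\<exists>h. pGH_approx Z (\<lambda>a b. c * dist a b) x Y dY y R \<epsilon> h"
proof -
  obtain \<theta> where \<theta>: "0 < \<theta>" and approx: "\<forall>\<^sub>F m in sequentially. \<forall>t. \<bar>t * r ^ m - c\<bar> < \<theta> \<longrightarrow>
      (\<exists>h. pGH_approx Z (\<lambda>a b. c * dist a b) x F (\<lambda>a b. t * dist a b) x R (\<epsilon> / 2) h)"
    using eventually_pGH_approx_Z_F[OF c R half_gt_zero[OF \<epsilon>]] by blast
  have "\<forall>\<^sub>F k in sequentially.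
      \<exists>f. pGH_approx F (\<lambda>a b. t k * dist a b) x Y dY y (R + \<epsilon> / 2) (\<epsilon> / 4) f"
    using conv R \<epsilon> unfolding pGH_conv_iff_pGH_approx by simp
  moreover have "\<forall>\<^sub>F k in sequentially. \<forall>t. \<bar>t * r ^ n k - c\<bar> < \<theta> \<longrightarrow>
      (\<exists>h. pGH_approx Z (\<lambda>a b. c * dist a b) x F (\<lambda>a b. t * dist a b) x R (\<epsilon> / 2) h)"
    using filterlim_iff[THEN iffD1, OF n] approx by blast
  moreover have "\<forall>\<^sub>F k in G. \<bar>t k * r ^ n k - c\<bar> < \<theta>"
    using tendstoD[OF lim \<theta>] by (simp add: dist_real_def)
  ultimately have "\<forall>\<^sub>F k in G.
      (\<exists>f. pGH_approx F (\<lambda>a b. t k * dist a b) x Y dY y (R + \<epsilon> / 2) (\<epsilon> / 4) f) \<and>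
      (\<forall>t. \<bar>t * r ^ n k - c\<bar> < \<theta> \<longrightarrow>
        (\<exists>h. pGH_approx Z (\<lambda>a b. c * dist a b) x F (\<lambda>a b. t * dist a b) x R (\<epsilon> / 2) h)) \<and>
      \<bar>t k * r ^ n k - c\<bar> < \<theta>"
    using filter_leD[OF G(2)] by (simp add: eventually_conj_iff)
  then obtain k f where f: "pGH_approx F (\<lambda>a b. t k * dist a b) x Y dY y (R + \<epsilon> / 2) (\<epsilon> / 4) f"
    and "\<exists>h. pGH_approx Z (\<lambda>a b. c * dist a b) x F (\<lambda>a b. t k * dist a b) x R (\<epsilon> / 2) h"
    using eventually_happens'[OF G(1)] by blast
  then obtain h where h: "pGH_approx Z (\<lambda>a b. c * dist a b) x F (\<lambda>a b. t k * dist a b) x R (\<epsilon> / 2) h"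
    by blast
  have "pGH_approx Z (\<lambda>a b. c * dist a b) x Y dY y R (2 * (\<epsilon> / 4) + \<epsilon> / 2) (f \<circ> h)"
    using R by (intro pGH_approx_compose[OF Metric_space_scaled_dist[OF c] fixed_in_Z
          Metric_space_scaled_dist[OF t] fixed_in_F Y f h]) simp_all
  then show ?thesis by auto
qed

lemma pointed_isometric_if_tangent_set:
  assumes Y: "proper_metric Y dY" "y \<in> Y" and tan: "tangent_set F dist x Y dY y"
  shows "\<exists>c>0. pointed_isometric Z (\<lambda>a b. c * dist a b) x Y dY y"
proof -
  obtain t where t: "\<And>k. 0 < t k" "filterlim t at_top sequentially"
    and conv: "pGH_conv (\<lambda>k. F) (\<lambda>k a b. t k * dist a b) (\<lambda>k. x) Y dY y"
    using tan unfolding tangent_set_def by blast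
  obtain n s where n: "filterlim n at_top sequentially" and s: "\<And>k. s k \<in> {1..1/r}"
    and ts: "\<forall>\<^sub>F k in sequentially. t k * r ^ n k = s k"
    using power_scale_decomposition[OF ratio t(2)] by blast
  obtain \<sigma> c where \<sigma>: "strict_mono \<sigma>" and c: "c \<in> {1..1/r}" and lim: "(s \<circ> \<sigma>) \<longlonglongrightarrow> c"
    using compact_imp_seq_compact[OF compact_Icc] s unfolding seq_compact_def by meson
  define G where "G = filtermap \<sigma> sequentially"
  have G: "G \<noteq> bot" "G \<le> sequentially"
    using filterlim_subseq[OF \<sigma>]
    by (simp_all add: G_def filterlim_def filtermap_sequentually_ne_bot)
  have "(s \<longlongrightarrow> c) G" using lim by (simp add: G_def filterlim_filtermap o_def)
  then have "((\<lambda>k. t k * r ^ n k) \<longlongrightarrow> c) G"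
    using filter_leD[OF G(2) ts] by (simp add: tendsto_cong)
  moreover have c0: "0 < c" using c by simp
  ultimately have "pointed_isometric Z (\<lambda>a b. c * dist a b) x Y dY y"
    using Y(1) t(1) conv n G
    by (intro pointed_isometric_if_pGH_approx[OF
          proper_metric_scale[OF proper_metric_closed[OF closed_Z] c0] fixed_in_Z Y]
        pGH_approx_Z_if_pGH_conv) (auto simp: proper_metric_def)
  then show ?thesis using c0 by blast
qed

end

theorem theorem2p6:
  fixes W :: "('a::euclidean_space \<Rightarrow> 'a) set"
    and F :: "'a set" and w :: "'a \<Rightarrow> 'a" and x :: 'a
    and Y :: "'b set" and dY :: "'b \<Rightarrow> 'b \<Rightarrow> real" and y :: 'b
  assumes "finite W" and "W \<noteq> {}"
    and "\<forall>v\<in>W. contracting_similarity v"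
    and "F \<noteq> {}" and "compact F" and "F = (\<Union>v\<in>W. v ` F)"
    and "w \<in> W" and "w x = x"
    and "proper_metric Y dY" and "y \<in> Y"
  shows "tangent_set F dist x Y dY y \<longleftrightarrow>
         (\<exists>c>0. pointed_isometric
                  (closure (\<Union>n::nat. (w ^^ n) -` F)) (\<lambda>a b. c * dist a b) x Y dY y)"
proof -
  obtain r where r: "0 < r" "r < 1" "\<And>a b. dist (w a) (w b) = r * dist a b"
    using assms(3,7) unfolding contracting_similarity_def by blast
  have "w ` F \<subseteq> F" using assms(6,7) by blast
  then interpret similarity_invariant_set w r F x
    using r assms(4,5,8) by unfold_locales simp_all
  have "closure (\<Union>n. (w ^^ n) -` F) = Z" by (simp add: Z_def blowup_def)
  moreover have "Metric_space Y dY" using assms(9) by (simp add: proper_metric_def)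
  ultimately show ?thesis
    using pointed_isometric_if_tangent_set[OF assms(9,10)] tangent_set_if_pointed_isometric by auto
qed

end
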